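(* Let $E$ be a nonzero real Banach space, let $K$ be a nonempty $w(E,E^* )$-compact convex subset of $E$, and let $\mathbb I_K$ be its indicator function ($0$ on $K$, $\infty$ off $K$). Then for all $(y^*,y^{**})\in E^*\times E^{**}$: $(y^*,y^{**})\in G\big((\partial\mathbb I_K)^{\mathbb F}\big)$ if and only if $y^{**}\in\widehat K$ and $\langle y^*,y^{**}\rangle=\sup_{x\in K}\langle x,y^*\rangle$.
   Context: $\widehat x\in E^{**}$ denotes the canonical image of $x\in E$ ($\langle x^*,\widehat x\rangle=\langle x,x^*\rangle$) and $\widehat K=\{\widehat x:x\in K\}$. For proper convex lsc $f$ on $E$, $x^*\in\partial f(x)$ iff $f(x)+f^*(x^* )=\langle x,x^*\rangle$; $\partial\mathbb I_K$ is closed, monotone and quasidense. For a multifunction $S\colon E\rightrightarrows E^*$ with nonempty graph $G(S)$: closed means $G(S)$ norm-closed; monotone means $\langle s-t,s^*-t^*\rangle\ge0$ on $G(S)$; quasidense means for every $(x,x^* )$, $\inf_{(s,s^* )\in G(S)}[\tfrac12\|s-x\|^2+\tfrac12\|s^*-x^*\|^2+\langle s-x,s^*-x^*\rangle]\le0$. Let $\varphi_S(x,x^* )=\sup_{(s,s^* )\in G(S)}[\langle s,x^*\rangle+\langle x,s^*\rangle-\langle s,s^*\rangle]$ and $\varphi_S^*$ its conjugate on $E^*\times E^{**}$ under $\langle (x,x^* ),(y^*,y^{**})\rangle=\langle x,y^*\rangle+\langle x^*,y^{**}\rangle$. For $S$ closed, monotone, quasidense, the Fitzpatrick extension $S^{\mathbb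 F}\colon E^*\rightrightarrows E^{**}$ is given by $(y^*,y^{**})\in G(S^{\mathbb F})$ iff $\varphi_S^*(y^*,y^{**})=\langle y^*,y^{**}\rangle$. *)

theory Defs
  imports "HOL-Analysis.Analysis"
begin

(* Dual space E^st is modelled as the type of bounded linear functionals
  'a \<Rightarrow>_L real; the bidual E^st^st as (('a \<Rightarrow>_L real) \<Rightarrow>_L real).
  Pairing: \<langle>x, x^st\<rangle> = blinfun_apply x^st x. *)

definition weak_topology :: "'a::real_normed_vector topology" where
  "weak_topology = topology_generated_by
     {{x. blinfun_apply f x \<in> U} | (f :: 'a \<Rightarrow>\<^sub>L real) U. open U}"

definition canon :: "'a::real_normed_vector \<Rightarrow> (('a \<Rightarrow>\<^sub>L real) \<Rightarrow>\<^sub>L real)" where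
  "canon x = Blinfun (\<lambda>f. blinfun_apply f x)"

definition indicator_fn :: "'a set \<Rightarrow> 'a \<Rightarrow> ereal" where
  "indicator_fn K x = (if x \<in> K then 0 else \<infinity>)"

definition subdiff_graph :: "('a::real_normed_vector \<Rightarrow> ereal) \<Rightarrow> ('a \<times> ('a \<Rightarrow>\<^sub>L real)) set" where
  "subdiff_graph f = {(x, xs). \<bar>f x\<bar> \<noteq> \<infinity> \<and>
       (\<forall>y. f y \<ge> f x + ereal (blinfun_apply xs (y - x)))}"

definition fitz :: "('a::real_normed_vector \<times> ('a \<Rightarrow>\<^sub>L real)) set \<Rightarrow> 'a \<Rightarrow> ('a \<Rightarrow>\<^sub>L real) \<Rightarrow> ereal" where
  "fitz G x xs = (SUP p\<in>G. ereal (blinfun_apply xs (fst p) + blinfun_apply (snd p) x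
                                   - blinfun_apply (snd p) (fst p)))"

definition fitz_conj :: "('a::real_normed_vector \<times> ('a \<Rightarrow>\<^sub>L real)) set \<Rightarrow>
     ('a \<Rightarrow>\<^sub>L real) \<Rightarrow> (('a \<Rightarrow>\<^sub>L real) \<Rightarrow>\<^sub>L real) \<Rightarrow> ereal" where
  "fitz_conj G ys yss = (SUP p\<in>(UNIV :: ('a \<times> ('a \<Rightarrow>\<^sub>L real)) set).
      ereal (blinfun_apply ys (fst p) + blinfun_apply yss (snd p)) - fitz G (fst p) (snd p))"

definition fitz_ext_graph :: "('a::real_normed_vector \<times> ('a \<Rightarrow>\<^sub>L real)) set \<Rightarrow>
     (('a \<Rightarrow>\<^sub>L real) \<times> (('a \<Rightarrow>\<^sub>L real) \<Rightarrow>\<^sub>L real)) set" where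
  "fitz_ext_graph G = {(ys, yss). fitz_conj G ys yss = ereal (blinfun_apply yss ys)}"

end

theory Submission
  imports Defs
begin

text \<open>For a maximiser \<open>x\<^sub>0\<close> of \<open>y\<^sup>*\<close> on \<open>K\<close>, evaluating the supremum defining
  \<open>\<phi>\<^sup>*\<close> against the graph point \<open>(x\<^sub>0, y\<^sup>*)\<close> shows \<open>(y\<^sup>*, \<^bold>\<hat>x\<^sub>0)\<close> lies in the Fitzpatrick
  extension. Conversely, testing \<open>\<phi>\<^sup>*(y\<^sup>*, y\<^sup>*\<^sup>*) = \<langle>y\<^sup>*, y\<^sup>*\<^sup>*\<rangle>\<close> against the pairs
  \<open>(x, n v)\<close> and letting \<open>n \<rightarrow> \<infinity>\<close> gives \<open>\<langle>v, y\<^sup>*\<^sup>*\<rangle> \<le> max\<^sub>K v\<close> for every \<open>v\<close>.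
  A bidual element below the support function of a weakly compact convex \<open>K\<close>
  is in \<open>\<^bold>\<hat>K\<close>: separating a point from a compact convex set in \<open>\<real>\<^sup>2\<close> shows that
  each slice \<open>K \<inter> {x. \<langle>x, z\<rangle> = \<langle>z, y\<^sup>*\<^sup>*\<rangle>}\<close> is again below the support function,
  so these weakly closed slices have the finite intersection property.\<close>

lemma canon_apply: "blinfun_apply (canon x) f = blinfun_apply f x"
  unfolding canon_def
  by (simp add: bounded_linear_Blinfun_apply
      bounded_bilinear.bounded_linear_left[OF bounded_bilinear_blinfun_apply])

lemma topspace_weak_topology: "topspace (weak_topology :: 'a::real_normed_vector topology) = UNIV"
proof -
  have "UNIV \<in> {{x. blinfun_apply f x \<in> U} | (f :: 'a \<Rightarrow>\<^sub>L real) U. open U}"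
    by (rule CollectI, rule exI[of _ 0], rule exI[of _ UNIV]) auto
  then show ?thesis
    unfolding weak_topology_def topology_generated_by_topspace by blast
qed

lemma openin_weak_topology_preimage:
  fixes f :: "'a::real_normed_vector \<Rightarrow>\<^sub>L real"
  shows "open U \<Longrightarrow> openin weak_topology {x. blinfun_apply f x \<in> U}"
  unfolding weak_topology_def
  by (rule topology_generated_by_Basis, rule CollectI, rule exI[of _ f], rule exI[of _ U]) simp

lemma continuous_map_weak_topology_blinfun:
  fixes f :: "'a::real_normed_vector \<Rightarrow>\<^sub>L real"
  shows "continuous_map weak_topology euclideanreal (blinfun_apply f)"
  unfolding continuous_map_def topspace_weak_topology
  using openin_weak_topology_preimage by auto

lemma closedin_weak_topology_level_set:
  fixes f :: "'a::real_normed_vector \<Rightarrow>\<^sub>L real"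
  shows "closedin weak_topology {x. blinfun_apply f x = c}"
proof -
  have "topspace weak_topology - {x. blinfun_apply f x = c} = {x. blinfun_apply f x \<in> - {c}}"
    by (auto simp: topspace_weak_topology)
  then show ?thesis
    unfolding closedin_def using openin_weak_topology_preimage[of "- {c}" f]
    by (simp add: open_Compl topspace_weak_topology)
qed

lemma weakly_compact_attains_max:
  fixes v :: "'a::real_normed_vector \<Rightarrow>\<^sub>L real"
  assumes "compactin weak_topology K" "K \<noteq> {}"
  shows "\<exists>x\<in>K. \<forall>y\<in>K. blinfun_apply v y \<le> blinfun_apply v x"
proof -
  have "compact (blinfun_apply v ` K)"
    using image_compactin[OF assms(1) continuous_map_weak_topology_blinfun[of v]] by simp
  with assms(2) show ?thesis
    using compact_attains_sup[of "blinfun_apply v ` K"] by auto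
qed

lemma weakly_compact_convex_fits_bidual_at:
  fixes K :: "'a::real_normed_vector set" and z w :: "'a \<Rightarrow>\<^sub>L real"
    and Y :: "('a \<Rightarrow>\<^sub>L real) \<Rightarrow>\<^sub>L real"
  assumes cK: "compactin weak_topology K" and cv: "convex K"
    and below: "\<And>v. \<exists>x\<in>K. blinfun_apply Y v \<le> blinfun_apply v x"
  shows "\<exists>x\<in>K. blinfun_apply z x = blinfun_apply Y z \<and> blinfun_apply Y w \<le> blinfun_apply w x"
proof (rule ccontr)
  assume no_fit: "\<not> ?thesis"
  define T where "T = (\<lambda>x. (blinfun_apply z x, blinfun_apply w x))"
  define S where "S = {blinfun_apply Y z} \<times> {blinfun_apply Y w..}"
  have "continuous_map weak_topology (prod_topology euclideanreal euclideanreal) T"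
    unfolding T_def by (intro continuous_map_pairedI continuous_map_weak_topology_blinfun)
  then have "compact (T ` K)" using image_compactin[OF cK] by fastforce
  have "linear T" unfolding T_def
    by (intro linearI) (auto simp: blinfun.add_right blinfun.scaleR_right)
  then have "convex (T ` K)" using convex_linear_image cv by blast
  have "T ` K \<noteq> {}" using below by blast
  have "convex S" "closed S" unfolding S_def by (auto intro!: convex_Times closed_Times)
  have "S \<inter> T ` K = {}" using no_fit unfolding S_def T_def by auto
  with separating_hyperplane_closed_compact[OF \<open>convex S\<close> \<open>closed S\<close> \<open>convex (T ` K)\<close>
      \<open>compact (T ` K)\<close> \<open>T ` K \<noteq> {}\<close>]
  obtain a b where sep: "\<forall>p\<in>S. inner a p < b" "\<forall>p\<in>T ` K. inner a p > b" by blast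
  define v where "v = (- fst a) *\<^sub>R z + (- snd a) *\<^sub>R w"
  obtain x where x: "x \<in> K" "blinfun_apply Y v \<le> blinfun_apply v x" using below by blast
  have "inner a (blinfun_apply Y z, blinfun_apply Y w) < b" using sep(1) unfolding S_def by auto
  moreover have "inner a (T x) > b" using sep(2) x(1) by auto
  moreover have "blinfun_apply Y v = - inner a (blinfun_apply Y z, blinfun_apply Y w)"
    unfolding v_def by (cases a) (simp add: blinfun.bilinear_simps)
  moreover have "blinfun_apply v x = - inner a (T x)"
    unfolding v_def T_def by (cases a) (simp add: blinfun.bilinear_simps)
  ultimately show False using x(2) by linarith
qed

lemma weakly_compact_convex_level_sets_fip:
  fixes K :: "'a::real_normed_vector set" and Y :: "('a \<Rightarrow>\<^sub>L real) \<Rightarrow>\<^sub>L real"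
  assumes "finite F" "compactin weak_topology K" "convex K"
    and "\<And>v. \<exists>x\<in>K. blinfun_apply Y v \<le> blinfun_apply v x"
  shows "K \<inter> (\<Inter>z\<in>F. {x. blinfun_apply z x = blinfun_apply Y z}) \<noteq> {}"
  using assms
proof (induction F arbitrary: K rule: finite_induct)
  case empty
  then show ?case by auto
next
  case (insert z F)
  define K' where "K' = K \<inter> {x. blinfun_apply z x = blinfun_apply Y z}"
  have "compactin weak_topology K'"
    unfolding K'_def using insert.prems(1) closed_Int_compactin[OF closedin_weak_topology_level_set]
    by (metis Int_commute)
  moreover have "convex K'"
    unfolding K'_def using insert.prems(2)
    by (intro convex_Int) (auto simp: convex_def blinfun.bilinear_simps algebra_simps
        distrib_right[symmetric])
  moreover have "\<exists>x\<in>K'. blinfun_apply Y v \<le> blinfun_apply v x" for v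
    unfolding K'_def using weakly_compact_convex_fits_bidual_at[OF insert.prems, of z v] by blast
  ultimately have "K' \<inter> (\<Inter>z\<in>F. {x. blinfun_apply z x = blinfun_apply Y z}) \<noteq> {}"
    by (rule insert.IH)
  then show ?case unfolding K'_def by auto
qed

lemma in_canon_image_if_below_support:
  fixes K :: "'a::real_normed_vector set" and Y :: "('a \<Rightarrow>\<^sub>L real) \<Rightarrow>\<^sub>L real"
  assumes cK: "compactin weak_topology K" and "convex K"
    and "\<And>v. \<exists>x\<in>K. blinfun_apply Y v \<le> blinfun_apply v x"
  shows "Y \<in> canon ` K"
proof -
  define level where "level z = {x. blinfun_apply z x = blinfun_apply Y z}" for z
  have "\<forall>C\<in>range level. closedin weak_topology C"
    unfolding level_def using closedin_weak_topology_level_set by blast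
  moreover have "K \<inter> \<Inter> F \<noteq> {}" if F: "finite F" "F \<subseteq> range level" for F
  proof -
    obtain F' where "finite F'" "F = level ` F'"
      using F by (meson finite_subset_image)
    then show ?thesis
      unfolding level_def using weakly_compact_convex_level_sets_fip assms by blast
  qed
  ultimately have "K \<inter> \<Inter> (range level) \<noteq> {}"
    using cK unfolding compactin_fip by blast
  then obtain x where x: "x \<in> K" "\<And>z. blinfun_apply z x = blinfun_apply Y z"
    unfolding level_def by blast
  have "Y = canon x" by (rule blinfun_eqI) (simp add: canon_apply x(2))
  with x(1) show ?thesis by blast
qed

lemma subdiff_graph_indicator_fn:
  "subdiff_graph (indicator_fn K) =
     {(x, xs). x \<in> K \<and> (\<forall>y\<in>K. blinfun_apply xs y \<le> blinfun_apply xs x)}"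
  unfolding subdiff_graph_def indicator_fn_def by (auto simp: blinfun.diff_right)

lemma fitz_ge_graph_point:
  "(s, ss) \<in> G \<Longrightarrow>
     ereal (blinfun_apply xs s + blinfun_apply ss x - blinfun_apply ss s) \<le> fitz G x xs"
  unfolding fitz_def by (rule SUP_upper2[of "(s, ss)"]) auto

lemma fitz_conj_ge:
  "ereal (blinfun_apply ys x + blinfun_apply yss xs) - fitz G x xs \<le> fitz_conj G ys yss"
  unfolding fitz_conj_def by (rule SUP_upper2[of "(x, xs)"]) auto

lemma fitz_indicator_le:
  fixes K :: "'a::real_normed_vector set" and xs :: "'a \<Rightarrow>\<^sub>L real"
  assumes "x \<in> K" "\<And>s. s \<in> K \<Longrightarrow> blinfun_apply xs s \<le> M"
  shows "fitz (subdiff_graph (indicator_fn K)) x xs \<le> ereal M"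
  unfolding fitz_def subdiff_graph_indicator_fn
proof (rule SUP_least)
  fix p :: "'a \<times> ('a \<Rightarrow>\<^sub>L real)"
  assume "p \<in> {(x, xs). x \<in> K \<and> (\<forall>y\<in>K. blinfun_apply xs y \<le> blinfun_apply xs x)}"
  then obtain s ss where "p = (s, ss)" "s \<in> K" "\<forall>y\<in>K. blinfun_apply ss y \<le> blinfun_apply ss s"
    by blast
  moreover from this have "blinfun_apply ss x \<le> blinfun_apply ss s" "blinfun_apply xs s \<le> M"
    using assms by auto
  ultimately show "ereal (blinfun_apply xs (fst p) + blinfun_apply (snd p) x
      - blinfun_apply (snd p) (fst p)) \<le> ereal M"
    by simp
qed

lemma fitz_ext_graph_indicator_le:
  fixes K :: "'a::real_normed_vector set"
  assumes "(ys, yss) \<in> fitz_ext_graph (subdiff_graph (indicator_fn K))"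
    and "x \<in> K" "\<And>s. s \<in> K \<Longrightarrow> blinfun_apply xs s \<le> M"
  shows "blinfun_apply ys x + blinfun_apply yss xs - M \<le> blinfun_apply yss ys"
proof -
  let ?G = "subdiff_graph (indicator_fn K)"
  have "ereal (blinfun_apply ys x + blinfun_apply yss xs) - fitz ?G x xs \<le> ereal (blinfun_apply yss ys)"
    using fitz_conj_ge[of ys x yss xs ?G] assms(1) unfolding fitz_ext_graph_def by simp
  moreover have "fitz ?G x xs \<le> ereal M"
    using fitz_indicator_le assms(2,3) by blast
  ultimately show ?thesis by (cases "fitz ?G x xs") auto
qed

lemma fitz_ext_graph_indicator_le_max:
  fixes K :: "'a::real_normed_vector set"
  assumes graph: "(ys, yss) \<in> fitz_ext_graph (subdiff_graph (indicator_fn K))"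
    and max: "x\<^sub>v \<in> K" "\<And>y. y \<in> K \<Longrightarrow> blinfun_apply v y \<le> blinfun_apply v x\<^sub>v"
  shows "blinfun_apply yss v \<le> blinfun_apply v x\<^sub>v"
proof (rule ccontr)
  assume "\<not> ?thesis"
  then have gap: "blinfun_apply yss v - blinfun_apply v x\<^sub>v > 0" by simp
  have "blinfun_apply ys x\<^sub>v \<le> blinfun_apply yss ys"
    using fitz_ext_graph_indicator_le[OF graph max(1), of 0 0] by simp
  define n where "n = (blinfun_apply yss ys - blinfun_apply ys x\<^sub>v + 1)
    / (blinfun_apply yss v - blinfun_apply v x\<^sub>v)"
  have "n \<ge> 0" using gap \<open>blinfun_apply ys x\<^sub>v \<le> blinfun_apply yss ys\<close> unfolding n_def by simp
  then have "blinfun_apply (n *\<^sub>R v) s \<le> n * blinfun_apply v x\<^sub>v" if "s \<in> K" for s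
    using max(2)[OF that] by (simp add: blinfun.scaleR_left mult_left_mono)
  from fitz_ext_graph_indicator_le[OF graph max(1) this]
  have "blinfun_apply ys x\<^sub>v + n * (blinfun_apply yss v - blinfun_apply v x\<^sub>v) \<le> blinfun_apply yss ys"
    by (simp add: blinfun.scaleR_right algebra_simps)
  moreover have "n * (blinfun_apply yss v - blinfun_apply v x\<^sub>v)
      = blinfun_apply yss ys - blinfun_apply ys x\<^sub>v + 1"
    using gap unfolding n_def by simp
  ultimately show False by simp
qed

lemma maximizer_in_fitz_ext_graph_indicator:
  fixes K :: "'a::real_normed_vector set"
  assumes x\<^sub>0: "x\<^sub>0 \<in> K" and max: "\<And>y. y \<in> K \<Longrightarrow> blinfun_apply ys y \<le> blinfun_apply ys x\<^sub>0"
  shows "(ys, canon x\<^sub>0) \<in> fitz_ext_graph (subdiff_graph (indicator_fn K))"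
proof -
  let ?G = "subdiff_graph (indicator_fn K)"
  have "(x\<^sub>0, ys) \<in> ?G" "(x\<^sub>0, 0) \<in> ?G"
    unfolding subdiff_graph_indicator_fn using x\<^sub>0 max by auto
  have "fitz ?G x\<^sub>0 ys = ereal (blinfun_apply ys x\<^sub>0)"
    using fitz_indicator_le[OF x\<^sub>0 max] fitz_ge_graph_point[OF \<open>(x\<^sub>0, 0) \<in> ?G\<close>, of ys x\<^sub>0]
    by (simp add: antisym)
  then have "ereal (blinfun_apply ys x\<^sub>0) \<le> fitz_conj ?G ys (canon x\<^sub>0)"
    using fitz_conj_ge[of ys x\<^sub>0 "canon x\<^sub>0" ys ?G] by (simp add: canon_apply)
  moreover have "fitz_conj ?G ys (canon x\<^sub>0) \<le> ereal (blinfun_apply ys x\<^sub>0)"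
    unfolding fitz_conj_def
  proof (rule SUP_least, clarify)
    fix x xs
    have "ereal (blinfun_apply xs x\<^sub>0 + blinfun_apply ys x - blinfun_apply ys x\<^sub>0) \<le> fitz ?G x xs"
      by (rule fitz_ge_graph_point[OF \<open>(x\<^sub>0, ys) \<in> ?G\<close>])
    then show "ereal (blinfun_apply ys x + blinfun_apply (canon x\<^sub>0) xs) - fitz ?G x xs
        \<le> ereal (blinfun_apply ys x\<^sub>0)"
      by (cases "fitz ?G x xs") (auto simp: canon_apply)
  qed
  ultimately show ?thesis
    unfolding fitz_ext_graph_def by (simp add: canon_apply antisym)
qed

lemma ereal_eq_SUP_iff_maximizer:
  assumes "x\<^sub>0 \<in> A"
  shows "ereal (f x\<^sub>0) = (SUP x\<in>A. ereal (f x)) \<longleftrightarrow> (\<forall>y\<in>A. f y \<le> f x\<^sub>0)"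
proof
  assume "ereal (f x\<^sub>0) = (SUP x\<in>A. ereal (f x))"
  then show "\<forall>y\<in>A. f y \<le> f x\<^sub>0"
    by (metis SUP_upper ereal_less_eq(3))
qed (use assms in \<open>auto intro!: antisym SUP_least SUP_upper2\<close>)

theorem theorem3p9:
  fixes K :: "'a::banach set"
  assumes "\<exists>x::'a. x \<noteq> 0"
    and "K \<noteq> {}"
    and "convex K"
    and "compactin weak_topology K"
  shows "\<forall>ys yss. (ys, yss) \<in> fitz_ext_graph (subdiff_graph (indicator_fn K)) \<longleftrightarrow>
           yss \<in> canon ` K \<and>
           ereal (blinfun_apply yss ys) = (SUP x\<in>K. ereal (blinfun_apply ys x))"
proof (intro allI)
  fix ys yss
  have below: "\<exists>x\<in>K. blinfun_apply yss v \<le> blinfun_apply v x"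
    if "(ys, yss) \<in> fitz_ext_graph (subdiff_graph (indicator_fn K))" for v
    using weakly_compact_attains_max[OF assms(4,2), of v] fitz_ext_graph_indicator_le_max[OF that]
    by blast
  show "(ys, yss) \<in> fitz_ext_graph (subdiff_graph (indicator_fn K)) \<longleftrightarrow>
      yss \<in> canon ` K \<and> ereal (blinfun_apply yss ys) = (SUP x\<in>K. ereal (blinfun_apply ys x))"
  proof
    assume graph: "(ys, yss) \<in> fitz_ext_graph (subdiff_graph (indicator_fn K))"
    then obtain x\<^sub>0 where "x\<^sub>0 \<in> K" "yss = canon x\<^sub>0"
      using in_canon_image_if_below_support[OF assms(4,3) below] by blast
    moreover have "blinfun_apply ys y \<le> blinfun_apply ys x\<^sub>0" if "y \<in> K" for y
      using fitz_ext_graph_indicator_le[OF graph that, of 0 0] \<open>yss = canon x\<^sub>0\<close>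
      by (simp add: canon_apply)
    ultimately show "yss \<in> canon ` K \<and> ereal (blinfun_apply yss ys) = (SUP x\<in>K. ereal (blinfun_apply ys x))"
      by (simp add: canon_apply ereal_eq_SUP_iff_maximizer[of x\<^sub>0 K "blinfun_apply ys"])
  next
    assume canon_sup: "yss \<in> canon ` K \<and> ereal (blinfun_apply yss ys) = (SUP x\<in>K. ereal (blinfun_apply ys x))"
    then obtain x\<^sub>0 where "x\<^sub>0 \<in> K" "yss = canon x\<^sub>0" by blast
    moreover from this canon_sup have "\<forall>y\<in>K. blinfun_apply ys y \<le> blinfun_apply ys x\<^sub>0"
      by (simp add: canon_apply ereal_eq_SUP_iff_maximizer[of x\<^sub>0 K "blinfun_apply ys"])
    ultimately show "(ys, yss) \<in> fitz_ext_graph (subdiff_graph (indicator_fn K))"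
      using maximizer_in_fitz_ext_graph_indicator by blast
  qed
qed

end
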